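(* Let $\varepsilon>0$ and $x_0$ satisfy $0\le x_0<\tfrac14$ and $\dfrac{\varepsilon^2}{\frac14-\varepsilon^2x_0}<1$. Define $\mathcal{C}:\mathbb{T}^1\to\mathbb{C}$ by $\mathcal{C}(\theta)=\tfrac14-\varepsilon^2x_0-\varepsilon^2e^{2\pi i\theta}$ and $\tilde\gamma:\mathbb{T}^1\to\mathbb{C}$ by $$\tilde\gamma(\theta)=\tfrac12+\varepsilon e^{2\pi i\theta}\sqrt{1+x_0e^{-4\pi i\theta}}$$ (principal branch of the square root). Let $\Gamma=\{(\langle 2\theta\rangle,\tilde\gamma(\theta)):\theta\in\mathbb{T}^1\}$. Then $\Gamma$ is an invariant $2$-curve for the static fibred quadratic polynomial $Q(\theta,z)=(\theta,\ z^2+\mathcal{C}(\theta))$; that is, $\tilde\gamma(\theta)^2+\mathcal{C}(\langle2\theta\rangle)=\tilde\gamma(\theta)$ for every $\theta\in\mathbb{T}^1$.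
   Context: $\mathbb{T}^1=\mathbb{R}/\mathbb{Z}$ and $\langle x\rangle$ denotes the fractional part. A $2$-curve is a set of the form $\{(\langle 2\theta\rangle,\tilde\gamma(\theta)):\theta\in\mathbb{T}^1\}$ with $\tilde\gamma:\mathbb{T}^1\to\mathbb{C}$ continuous and injective. For a fibred map $F(\theta,z)=(\theta+\alpha,f_\theta(z))$ (here $\alpha=0$, "static"), a $2$-curve is invariant if for some $\tau\in\{0,1\}$, $f_{\langle2\theta\rangle}(\tilde\gamma(\theta))=\tilde\gamma(\theta+\tfrac{\alpha+\tau}{2})$ for all $\theta$; here this is the case $\tau=0$. *)

theory Defs
  imports "HOL-Analysis.Analysis"
begin

text \<open>Functions on the circle T^1 = R/Z are represented as 1-periodic functions on the reals.
  A 2-curve is given by a parametrisation gt : T^1 -> C that is continuous and injective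
  (injectivity on T^1 = injectivity on a fundamental domain [0,1)).\<close>

definition two_curve_param :: "(real \<Rightarrow> complex) \<Rightarrow> bool" where
  "two_curve_param gt \<longleftrightarrow>
     (\<forall>\<theta>. gt (\<theta> + 1) = gt \<theta>) \<and> continuous_on UNIV gt \<and> inj_on gt {0..<1}"

definition two_curve_set :: "(real \<Rightarrow> complex) \<Rightarrow> (real \<times> complex) set" where
  "two_curve_set gt = {(frac (2 * \<theta>), gt \<theta>) | \<theta>. \<theta> \<in> {0..<1}}"

text \<open>Invariance of a 2-curve for a fibred map F(theta,z) = (theta + alpha, f theta z),
  with given tau in {0,1}:  f <2 theta> (gt theta) = gt (theta + (alpha+tau)/2).\<close>
definition invariant_two_curve ::
  "real \<Rightarrow> (real \<Rightarrow> complex \<Rightarrow> complex) \<Rightarrow> (real \<Rightarrow> complex) \<Rightarrow> bool" where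
  "invariant_two_curve \<alpha> f gt \<longleftrightarrow> two_curve_param gt \<and>
     (\<exists>\<tau>\<in>{0::real, 1}. \<forall>\<theta>. f (frac (2 * \<theta>)) (gt \<theta>) = gt (\<theta> + (\<alpha> + \<tau>) / 2))"

definition Cfun :: "real \<Rightarrow> real \<Rightarrow> real \<Rightarrow> complex" where
  "Cfun \<epsilon> x0 \<theta> = 1/4 - of_real (\<epsilon>^2 * x0) - of_real (\<epsilon>^2) * exp (2 * of_real pi * \<i> * of_real \<theta>)"

definition gamma_tilde :: "real \<Rightarrow> real \<Rightarrow> real \<Rightarrow> complex" where
  "gamma_tilde \<epsilon> x0 \<theta> = 1/2 + of_real \<epsilon> * exp (2 * of_real pi * \<i> * of_real \<theta>)
      * csqrt (1 + of_real x0 * exp (- 4 * of_real pi * \<i> * of_real \<theta>))"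

end

theory Submission
  imports Defs
begin

text \<open>With u = exp(2\<pi>i\<theta>) and w = u \<surd>(1 + x0/u^2) we have gamma_tilde(\<theta>) = 1/2 + \<epsilon> w,
  and w^2 = u^2 + x0 for either choice of the square root. Since C(frac(2\<theta>)) depends on \<theta>
  only through exp(2\<pi>i 2\<theta>) = u^2, this gives gamma_tilde^2 - gamma_tilde = \<epsilon>^2 w^2 - 1/4 = -C(frac(2\<theta>)).
  For |x0| < 1 the radicand has positive real part, so the principal root is continuous along the
  circle and w never vanishes. As for injectivity, w determines u^2 and hence u up to sign; but
  u \<mapsto> -u leaves the root factor unchanged and therefore negates w \<noteq> 0. So w determines u,
  that is, \<theta> modulo 1.\<close>

lemma exp_2pi_i_eq_iff:
  "exp (2 * of_real pi * \<i> * of_real a) = exp (2 * of_real pi * \<i> * of_real b) \<longleftrightarrow> a - b \<in> \<int>"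
proof -
  have "exp (2 * of_real pi * \<i> * of_real a) = exp (2 * of_real pi * \<i> * of_real b) \<longleftrightarrow>
        (\<exists>n::int. (2 * of_real pi * \<i>) * of_real (a - b - of_int n) = 0)"
    by (simp add: exp_eq algebra_simps)
  also have "\<dots> \<longleftrightarrow> (\<exists>n::int. a - b - of_int n = 0)"
    by (simp only: mult_eq_0_iff of_real_eq_0_iff) simp
  also have "\<dots> \<longleftrightarrow> (\<exists>n::int. a - b = of_int n)"
    by simp
  finally show ?thesis
    by (metis Ints_cases Ints_of_int)
qed

lemma exp_2pi_i_frac:
  "exp (2 * of_real pi * \<i> * of_real (frac x)) = exp (2 * of_real pi * \<i> * of_real x)"
  unfolding exp_2pi_i_eq_iff by (simp add: frac_def)

lemma exp_2pi_i_double: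
  "exp (2 * of_real pi * \<i> * of_real (2 * x)) = exp (2 * of_real pi * \<i> * of_real x) ^ 2"
  by (simp add: exp_double [symmetric] algebra_simps)

lemma exp_minus_4pi_i:
  "exp (- 4 * of_real pi * \<i> * of_real x) = 1 / exp (2 * of_real pi * \<i> * of_real x) ^ 2"
  by (simp add: exp_double [symmetric] exp_minus [symmetric] field_simps exp_minus_inverse)

lemma Re_one_plus_pos: "norm z < 1 \<Longrightarrow> 0 < Re (1 + z)"
  using abs_Re_le_cmod [of z] by simp

definition root_branch :: "complex \<Rightarrow> complex \<Rightarrow> complex" where
  "root_branch c u = u * csqrt (1 + c / u\<^sup>2)"

lemma root_branch_square: "u \<noteq> 0 \<Longrightarrow> (root_branch c u)\<^sup>2 = u\<^sup>2 + c"
  by (simp add: root_branch_def power_mult_distrib field_simps)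

lemma root_branch_eq_imp_eq:
  assumes "u \<noteq> 0" "v \<noteq> 0" "1 + c / u\<^sup>2 \<noteq> 0" "root_branch c u = root_branch c v"
  shows "u = v"
proof (rule ccontr)
  assume "u \<noteq> v"
  have "u\<^sup>2 = v\<^sup>2"
    using root_branch_square [of u c] root_branch_square [of v c] assms by simp
  with \<open>u \<noteq> v\<close> have "u = - v"
    by (simp add: power2_eq_iff)
  then have "root_branch c u = - root_branch c v"
    by (simp add: root_branch_def)
  with assms(4) have "root_branch c u = 0"
    by simp
  with assms(1,3) show False
    by (simp add: root_branch_def)
qed

lemma gamma_tilde_eq_root_branch:
  "gamma_tilde \<epsilon> x0 t = 1/2 + of_real \<epsilon> * root_branch (of_real x0) (exp (2 * of_real pi * \<i> * of_real t))"
  unfolding gamma_tilde_def root_branch_def exp_minus_4pi_i by (simp add: mult.assoc)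

lemma gamma_tilde_fixed_point:
  "(gamma_tilde \<epsilon> x0 t)\<^sup>2 + Cfun \<epsilon> x0 (frac (2 * t)) = gamma_tilde \<epsilon> x0 t"
proof -
  define u where "u = exp (2 * of_real pi * \<i> * of_real t)"
  define w where "w = root_branch (of_real x0) u"
  have Cfun_eq: "Cfun \<epsilon> x0 (frac (2 * t)) = 1/4 - of_real (\<epsilon>\<^sup>2 * x0) - of_real (\<epsilon>\<^sup>2) * u\<^sup>2"
    unfolding Cfun_def exp_2pi_i_frac exp_2pi_i_double u_def ..
  have "(gamma_tilde \<epsilon> x0 t)\<^sup>2 + Cfun \<epsilon> x0 (frac (2 * t))
      = gamma_tilde \<epsilon> x0 t + of_real (\<epsilon>\<^sup>2) * (w\<^sup>2 - u\<^sup>2 - of_real x0)"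
    unfolding Cfun_eq gamma_tilde_eq_root_branch u_def [symmetric] w_def [symmetric]
    by (simp add: power2_eq_square algebra_simps)
  also have "w\<^sup>2 = u\<^sup>2 + of_real x0"
    by (simp add: w_def u_def root_branch_square)
  finally show ?thesis
    by simp
qed

lemma gamma_tilde_periodic: "gamma_tilde \<epsilon> x0 (t + 1) = gamma_tilde \<epsilon> x0 t"
proof -
  have "exp (2 * of_real pi * \<i> * of_real (t + 1)) = exp (2 * of_real pi * \<i> * of_real t)"
    unfolding exp_2pi_i_eq_iff by simp
  then show ?thesis
    by (simp only: gamma_tilde_eq_root_branch)
qed

lemma Re_gamma_tilde_radicand_pos:
  assumes "\<bar>x0\<bar> < 1"
  shows "0 < Re (1 + of_real x0 / exp (2 * of_real pi * \<i> * of_real t) ^ 2)"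
  using assms by (intro Re_one_plus_pos) (simp add: norm_divide norm_power)

lemma continuous_on_gamma_tilde:
  assumes "\<bar>x0\<bar> < 1"
  shows "continuous_on UNIV (gamma_tilde \<epsilon> x0)"
proof (rule continuous_at_imp_continuous_on, intro ballI)
  fix t :: real
  have "1 + of_real x0 / exp (2 * of_real pi * \<i> * of_real t) ^ 2 \<notin> \<real>\<^sub>\<le>\<^sub>0"
    using Re_gamma_tilde_radicand_pos [OF assms, of t] by (auto simp: complex_nonpos_Reals_iff)
  then show "isCont (gamma_tilde \<epsilon> x0) t"
    unfolding gamma_tilde_eq_root_branch root_branch_def
    by (intro continuous_intros isCont_csqrt') simp_all
qed

lemma gamma_tilde_eq_imp_Ints:
  assumes "\<epsilon> \<noteq> 0" "\<bar>x0\<bar> < 1" "gamma_tilde \<epsilon> x0 a = gamma_tilde \<epsilon> x0 b"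
  shows "a - b \<in> \<int>"
proof -
  have "exp (2 * of_real pi * \<i> * of_real a) = exp (2 * of_real pi * \<i> * of_real b)"
  proof (rule root_branch_eq_imp_eq)
    show "1 + of_real x0 / exp (2 * of_real pi * \<i> * of_real a) ^ 2 \<noteq> 0"
      using Re_gamma_tilde_radicand_pos [OF assms(2), of a] by (metis less_irrefl zero_complex.sel(1))
    show "root_branch (of_real x0) (exp (2 * of_real pi * \<i> * of_real a)) =
          root_branch (of_real x0) (exp (2 * of_real pi * \<i> * of_real b))"
      using assms(1,3) by (simp add: gamma_tilde_eq_root_branch)
  qed simp_all
  then show ?thesis
    by (simp add: exp_2pi_i_eq_iff)
qed

lemma two_curve_param_gamma_tilde:
  assumes "\<epsilon> \<noteq> 0" "\<bar>x0\<bar> < 1"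
  shows "two_curve_param (gamma_tilde \<epsilon> x0)"
  unfolding two_curve_param_def
proof (intro conjI allI inj_onI)
  fix a b :: real
  assume "a \<in> {0..<1}" "b \<in> {0..<1}" "gamma_tilde \<epsilon> x0 a = gamma_tilde \<epsilon> x0 b"
  then show "a = b"
    using gamma_tilde_eq_imp_Ints [OF assms] Ints_nonzero_abs_less1 [of "a - b"] by force
qed (simp_all add: gamma_tilde_periodic continuous_on_gamma_tilde assms)

theorem mainTheorem2:
  fixes \<epsilon> x0 :: real
  assumes "\<epsilon> > 0" and "0 \<le> x0" and "x0 < 1/4"
    and "\<epsilon>^2 / (1/4 - \<epsilon>^2 * x0) < 1"
  shows "invariant_two_curve 0 (\<lambda>\<theta> z. z^2 + Cfun \<epsilon> x0 \<theta>) (gamma_tilde \<epsilon> x0)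
         \<and> (\<forall>\<theta>. (gamma_tilde \<epsilon> x0 \<theta>)^2 + Cfun \<epsilon> x0 (frac (2 * \<theta>)) = gamma_tilde \<epsilon> x0 \<theta>)"
proof -
  have "two_curve_param (gamma_tilde \<epsilon> x0)"
    using assms(1-3) by (intro two_curve_param_gamma_tilde) auto
  then show ?thesis
    unfolding invariant_two_curve_def by (auto simp: gamma_tilde_fixed_point)
qed

end
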